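(* Let $G$ be a connected finite simple graph with $n$ vertices and diameter at most $2$. Then for every $R$-weighted complete graph $X$ with $n$ vertices, $|s(\{I(G)\}*\{X\})|=1$ if and only if $|s(\{\rho(G)\}*\{X\})|=1$; that is, $I(G)^{\perp}=\rho(G)^{\perp}$.
   Context: Fix a commutative ring $R$. An $R$-weighted complete graph $K$ is a finite vertex set with a weight $v_K(e)\in R$ on every 2-subset $e$. For such $H,G'$ with equal vertex counts and a bijection $f:V(H)\to V(G')$, $H*_fG'$ has vertex set $V(H)$ and weights $v_H(\{x,y\})v_{G'}(\{f(x),f(y)\})$; $H*G'=\{H*_fG': f \text{ bijection}\}$. $s(K)=\sum_e v_K(e)$, $s(\mathscr K)=\{s(K):K\in\mathscr K\}$. For a weighted complete graph $H$, $H^{\perp}$ is the class of $R$-weighted complete graphs $X$ with $|V(X)|=|V(H)|$ and $|s(H*X)|=1$. For a simple graph $G$, $I(G)$ has weight $1$ on edges and $0$ on non-edges; for connected $G$, $\rho(G)$ has weight $\rho_G(x,y)$ (graph distance) on $\{x,y\}$. *)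

theory Defs
  imports Main
begin

text \<open>An R-weighted complete graph: a finite vertex set V together with a weight
  function on 2-subsets of V (values of w on other sets are irrelevant).\<close>
type_synonym ('a, 'r) wcg = "'a set \<times> ('a set \<Rightarrow> 'r)"

definition two_subsets :: "'a set \<Rightarrow> 'a set set" where
  "two_subsets V = {e. e \<subseteq> V \<and> card e = 2}"

definition is_wcg :: "('a, 'r) wcg \<Rightarrow> bool" where
  "is_wcg K \<longleftrightarrow> finite (fst K)"

definition wsum :: "('a, 'r::comm_ring_1) wcg \<Rightarrow> 'r" where
  "wsum K = (\<Sum>e\<in>two_subsets (fst K). snd K e)"

definition wprod_f :: "('a, 'r::comm_ring_1) wcg \<Rightarrow> ('b, 'r) wcg \<Rightarrow> ('a \<Rightarrow> 'b) \<Rightarrow> ('a, 'r) wcg" where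
  "wprod_f H G f = (fst H, \<lambda>e. snd H e * snd G (f ` e))"

definition wprod :: "('a, 'r::comm_ring_1) wcg \<Rightarrow> ('b, 'r) wcg \<Rightarrow> ('a, 'r) wcg set" where
  "wprod H G = {wprod_f H G f | f. bij_betw f (fst H) (fst G)}"

definition perp :: "('a, 'r::comm_ring_1) wcg \<Rightarrow> ('b, 'r) wcg set" where
  "perp H = {X. is_wcg X \<and> card (fst X) = card (fst H) \<and> card (wsum ` wprod H X) = 1}"

definition simple_graph :: "'a set \<Rightarrow> ('a \<Rightarrow> 'a \<Rightarrow> bool) \<Rightarrow> bool" where
  "simple_graph V E \<longleftrightarrow> finite V \<and> (\<forall>x y. E x y \<longrightarrow> x \<in> V \<and> y \<in> V)
     \<and> (\<forall>x y. E x y \<longrightarrow> E y x) \<and> (\<forall>x. \<not> E x x)"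

definition has_walk :: "('a \<Rightarrow> 'a \<Rightarrow> bool) \<Rightarrow> 'a \<Rightarrow> 'a \<Rightarrow> nat \<Rightarrow> bool" where
  "has_walk E x y n \<longleftrightarrow> (\<exists>p :: nat \<Rightarrow> 'a. p 0 = x \<and> p n = y \<and> (\<forall>i<n. E (p i) (p (Suc i))))"

definition connected_graph :: "'a set \<Rightarrow> ('a \<Rightarrow> 'a \<Rightarrow> bool) \<Rightarrow> bool" where
  "connected_graph V E \<longleftrightarrow> (\<forall>x\<in>V. \<forall>y\<in>V. \<exists>n. has_walk E x y n)"

definition gdist :: "('a \<Rightarrow> 'a \<Rightarrow> bool) \<Rightarrow> 'a \<Rightarrow> 'a \<Rightarrow> nat" where
  "gdist E x y = (LEAST n. has_walk E x y n)"

definition diam_le :: "'a set \<Rightarrow> ('a \<Rightarrow> 'a \<Rightarrow> bool) \<Rightarrow> nat \<Rightarrow> bool" where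
  "diam_le V E d \<longleftrightarrow> (\<forall>x\<in>V. \<forall>y\<in>V. gdist E x y \<le> d)"

definition I_graph :: "'a set \<Rightarrow> ('a \<Rightarrow> 'a \<Rightarrow> bool) \<Rightarrow> ('a, 'r::comm_ring_1) wcg" where
  "I_graph V E = (V, \<lambda>e. if (\<exists>x y. e = {x, y} \<and> E x y) then 1 else 0)"

definition rho_graph :: "'a set \<Rightarrow> ('a \<Rightarrow> 'a \<Rightarrow> bool) \<Rightarrow> ('a, 'r::comm_ring_1) wcg" where
  "rho_graph V E = (V, \<lambda>e. if (\<exists>x y. e = {x, y} \<and> x \<noteq> y)
      then (case (SOME (x, y). e = {x, y} \<and> x \<noteq> y) of (x, y) \<Rightarrow> of_nat (gdist E x y)) else 0)"

end

theory Submission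
  imports Defs
begin

text \<open>In a connected graph of diameter at most 2, two distinct vertices are at distance 1 or 2,
  so \<open>\<rho>(G) = 2 J - I(G)\<close>, where \<open>J\<close> has weight 1 on every 2-subset. Hence for every
  bijection \<open>f\<close> we get \<open>s(\<rho>(G) *\<^sub>f X) = 2 s(X) - s(I(G) *\<^sub>f X)\<close>: the sets
  \<open>s(\<rho>(G) * X)\<close> and \<open>s(I(G) * X)\<close> are images of each other under the injective map
  \<open>t \<mapsto> 2 s(X) - t\<close>, so one is a singleton exactly when the other is.\<close>

lemma has_walk_0_iff: "has_walk E x y 0 \<longleftrightarrow> x = y"
  unfolding has_walk_def by auto

lemma has_walk_1_iff: "has_walk E x y 1 \<longleftrightarrow> E x y"
proof
  assume "E x y"
  then show "has_walk E x y 1"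
    unfolding has_walk_def by (intro exI[of _ "\<lambda>i. if i = 0 then x else y"]) auto
qed (auto simp: has_walk_def)

lemma has_walk_sym:
  assumes "symp E" and "has_walk E x y n"
  shows "has_walk E y x n"
proof -
  obtain p where p: "p 0 = x" "p n = y" "\<forall>i<n. E (p i) (p (Suc i))"
    using assms(2) unfolding has_walk_def by blast
  have "E (p (n - i)) (p (n - Suc i))" if "i < n" for i
  proof -
    have "E (p (n - Suc i)) (p (n - i))"
      using p(3)[rule_format, of "n - Suc i"] that by (simp add: Suc_diff_Suc)
    then show ?thesis
      using assms(1) by (rule sympD[rotated])
  qed
  then show ?thesis
    unfolding has_walk_def using p(1,2) by (intro exI[of _ "\<lambda>i. p (n - i)"]) auto
qed

lemma gdist_sym:
  assumes "symp E"
  shows "gdist E x y = gdist E y x"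
proof -
  have "has_walk E x y = has_walk E y x"
    by (intro ext iffI) (auto intro: has_walk_sym[OF assms])
  then show ?thesis
    unfolding gdist_def by simp
qed

lemma gdist_diameter_2:
  assumes "connected_graph V E" "diam_le V E 2" "x \<in> V" "y \<in> V" "x \<noteq> y"
  shows "gdist E x y = (if E x y then 1 else 2)"
proof -
  have "\<exists>n. has_walk E x y n"
    using assms(1,3,4) unfolding connected_graph_def by auto
  then have walk: "has_walk E x y (gdist E x y)"
    unfolding gdist_def by (rule LeastI_ex)
  have "gdist E x y \<le> 2"
    using assms(2-4) unfolding diam_le_def by auto
  moreover have "gdist E x y \<noteq> 0"
    using walk assms(5) by (metis has_walk_0_iff)
  moreover have "gdist E x y \<le> 1" if "E x y"
    using that has_walk_1_iff unfolding gdist_def by (metis Least_le)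
  moreover have "gdist E x y \<noteq> 1" if "\<not> E x y"
    using walk that has_walk_1_iff by metis
  ultimately show ?thesis
    by (cases "E x y") auto
qed

lemma fst_rho_graph [simp]: "fst (rho_graph V E) = V"
  by (simp add: rho_graph_def)

lemma fst_I_graph [simp]: "fst (I_graph V E) = V"
  by (simp add: I_graph_def)

lemma rho_graph_weight:
  assumes "symp E" and "x \<noteq> y"
  shows "snd (rho_graph V E :: ('a, 'r::comm_ring_1) wcg) {x, y} = of_nat (gdist E x y)"
proof -
  have "\<exists>p. case p of (a, b) \<Rightarrow> {x, y} = {a, b} \<and> a \<noteq> b"
    using assms(2) by auto
  then have "case SOME (a, b). {x, y} = {a, b} \<and> a \<noteq> b of (a, b) \<Rightarrow> {x, y} = {a, b} \<and> a \<noteq> b"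
    by (rule someI_ex)
  then obtain a b where ab: "(SOME (a, b). {x, y} = {a, b} \<and> a \<noteq> b) = (a, b)" "{x, y} = {a, b}"
    by auto
  have "gdist E a b = gdist E x y"
    using ab(2) gdist_sym[OF assms(1)] by (auto simp: doubleton_eq_iff)
  then show ?thesis
    unfolding rho_graph_def using ab(1) assms(2) by auto
qed

lemma I_graph_weight:
  assumes "symp E"
  shows "snd (I_graph V E :: ('a, 'r::comm_ring_1) wcg) {x, y} = (if E x y then 1 else 0)"
  unfolding I_graph_def by (auto simp: doubleton_eq_iff intro: sympD[OF assms])

lemma rho_graph_weight_diameter_2:
  assumes "simple_graph V E" "connected_graph V E" "diam_le V E 2" "e \<in> two_subsets V"
  shows "snd (rho_graph V E :: ('a, 'r::comm_ring_1) wcg) e = 2 - snd (I_graph V E :: ('a, 'r) wcg) e"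
proof -
  have sym: "symp E"
    using assms(1) unfolding simple_graph_def by (blast intro: sympI)
  obtain x y where e: "e = {x, y}" "x \<noteq> y" "x \<in> V" "y \<in> V"
    using assms(4) unfolding two_subsets_def by (auto simp: card_2_iff)
  have "snd (rho_graph V E :: ('a, 'r) wcg) e = of_nat (gdist E x y)"
    unfolding e(1) by (rule rho_graph_weight[OF sym e(2)])
  moreover have "snd (I_graph V E :: ('a, 'r) wcg) e = (if E x y then 1 else 0)"
    unfolding e(1) by (rule I_graph_weight[OF sym])
  ultimately show ?thesis
    using gdist_diameter_2[OF assms(2,3) e(3,4,2)] by (cases "E x y") simp_all
qed

lemma bij_betw_two_subsets:
  assumes "bij_betw f V W"
  shows "bij_betw (image f) (two_subsets V) (two_subsets W)"
proof (rule bij_betw_subset[OF bij_betw_Pow[OF assms]])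
  have "card (f ` e) = card e" if "e \<subseteq> V" for e
    using assms that by (meson bij_betw_imp_inj_on card_image inj_on_subset)
  then show "image f ` two_subsets V = two_subsets W"
    using bij_betw_imp_surj_on[OF assms] unfolding two_subsets_def
    by (auto elim!: subset_imageE)
qed (auto simp: two_subsets_def)

lemma wsum_wprod_f_complement:
  fixes H H' :: "('a, 'r::comm_ring_1) wcg" and X :: "('b, 'r) wcg"
  assumes "fst H' = fst H" "\<And>e. e \<in> two_subsets (fst H) \<Longrightarrow> snd H' e = c - snd H e"
    and "bij_betw f (fst H) (fst X)"
  shows "wsum (wprod_f H' X f) = c * wsum X - wsum (wprod_f H X f)"
proof -
  have "wsum (wprod_f H' X f) = (\<Sum>e\<in>two_subsets (fst H). (c - snd H e) * snd X (f ` e))"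
    unfolding wsum_def wprod_f_def using assms(1,2) by simp
  also have "\<dots> = c * (\<Sum>e\<in>two_subsets (fst H). snd X (f ` e)) - wsum (wprod_f H X f)"
    unfolding wsum_def wprod_f_def
    by (simp add: left_diff_distrib sum_subtractf sum_distrib_left)
  also have "(\<Sum>e\<in>two_subsets (fst H). snd X (f ` e)) = wsum X"
    unfolding wsum_def by (rule sum.reindex_bij_betw[OF bij_betw_two_subsets[OF assms(3)]])
  finally show ?thesis .
qed

lemma wsum_wprod_eq_image:
  "wsum ` wprod H X = (\<lambda>f. wsum (wprod_f H X f)) ` {f. bij_betw f (fst H) (fst X)}"
  unfolding wprod_def by blast

lemma perp_complement:
  fixes H H' :: "('a, 'r::comm_ring_1) wcg"
  assumes "fst H' = fst H" "\<And>e. e \<in> two_subsets (fst H) \<Longrightarrow> snd H' e = c - snd H e"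
  shows "(perp H' :: ('b, 'r) wcg set) = perp H"
proof -
  have "wsum ` wprod H' X = (\<lambda>t. c * wsum X - t) ` (wsum ` wprod H X)" for X :: "('b, 'r) wcg"
  proof -
    have "wsum (wprod_f H' X f) = c * wsum X - wsum (wprod_f H X f)"
      if "bij_betw f (fst H) (fst X)" for f
      using wsum_wprod_f_complement[OF assms that] .
    then show ?thesis
      unfolding wsum_wprod_eq_image image_image assms(1) by (intro image_cong) auto
  qed
  moreover have "inj (\<lambda>t. c * wsum X - t)" for X :: "('b, 'r) wcg"
    by (rule injI) simp
  ultimately show ?thesis
    unfolding perp_def assms(1) by (simp add: card_image inj_on_subset)
qed

theorem mainTheorem18:
  fixes V :: "'a set" and E :: "'a \<Rightarrow> 'a \<Rightarrow> bool"
  assumes "simple_graph V E" and "connected_graph V E" and "diam_le V E 2"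
  shows "(perp (I_graph V E :: ('a, 'r::comm_ring_1) wcg) :: ('b, 'r) wcg set)
       = perp (rho_graph V E :: ('a, 'r) wcg)"
proof (rule sym, rule perp_complement)
  show "snd (rho_graph V E :: ('a, 'r) wcg) e = 2 - snd (I_graph V E :: ('a, 'r) wcg) e"
    if "e \<in> two_subsets (fst (I_graph V E :: ('a, 'r) wcg))" for e
    using that rho_graph_weight_diameter_2[OF assms] by simp
qed simp

end
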